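(* Let $\mathfrak{Q}\subset\mathbb{R}^2$ be open, $\phi\colon S^1\times\mathfrak{Q}\to\mathbb{R}$ smooth ($S^1=\mathbb{R}/\mathbb{Z}$, $\phi_t:=\phi(t,\cdot)$), and $\mathbf{A}$ a twisted-periodic vector potential on $\mathfrak{Q}$ (see context). Then $$(\mathbf{A}^\phi)_t:=\mathbf{A}_t+\int_0^t\nabla\phi_s\,ds$$ is again a twisted-periodic vector potential on $\mathfrak{Q}$. Moreover, a smooth map $t\mapsto q(t)\in\mathfrak{Q}$ solves the $(\mathbf{A},\phi)$-equation $$\ddot q=-\bigl(\mathrm{rot}\,\mathbf{A}_t(q)\bigr)J_0\dot q-\dot{\mathbf{A}}_t(q)-\nabla\phi_t(q)$$ if and only if it solves the $(\mathbf{A}^\phi,0)$-equation $$\ddot q=-\bigl(\mathrm{rot}\,(\mathbf{A}^\phi)_t(q)\bigr)J_0\dot q-\dot{(\mathbf{A}^\phi)}_t(q).$$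
   Context: A twisted-periodic vector potential on $\mathfrak{Q}$ is a smooth map $\mathbf{A}\colon\mathbb{R}\times\mathfrak{Q}\to\mathbb{R}^2$, $\mathbf{A}_t=(A^1_t,A^2_t):=\mathbf{A}(t,\cdot)$, such that for all $t$: $\dot{\mathbf{A}}_{t+1}=\dot{\mathbf{A}}_t$, $\mathrm{rot}\,\mathbf{A}_{t+1}=\mathrm{rot}\,\mathbf{A}_t$, and $\mathbf{A}_{t+1}-\mathbf{A}_t=\nabla f_t$ with $f_t=f(t,\cdot)$ for some smooth $f\colon\mathbb{R}\times\mathfrak{Q}\to\mathbb{R}$. Here the dot is $\partial_t$, $\mathrm{rot}\,\mathbf{A}_t:=\partial_{q_1}A^2_t-\partial_{q_2}A^1_t$, and $J_0=\begin{pmatrix}0&-1\\1&0\end{pmatrix}$. *)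

theory Defs
  imports "HOL-Analysis.Analysis"
begin

fun iter_dderiv :: "'a::real_normed_vector list \<Rightarrow> ('a \<Rightarrow> 'b::real_normed_vector) \<Rightarrow> 'a \<Rightarrow> 'b" where
  "iter_dderiv [] f = f"
| "iter_dderiv (v # vs) f = (\<lambda>x. frechet_derivative (iter_dderiv vs f) (at x) v)"

definition smooth_on :: "'a::real_normed_vector set \<Rightarrow> ('a \<Rightarrow> 'b::real_normed_vector) \<Rightarrow> bool" where
  "smooth_on S f \<longleftrightarrow> (\<forall>vs. iter_dderiv vs f differentiable_on S)"

definition grad :: "(real \<times> real \<Rightarrow> real) \<Rightarrow> real \<times> real \<Rightarrow> real \<times> real" where
  "grad g x = (frechet_derivative g (at x) (1, 0), frechet_derivative g (at x) (0, 1))"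

definition rot :: "(real \<times> real \<Rightarrow> real \<times> real) \<Rightarrow> real \<times> real \<Rightarrow> real" where
  "rot A x = frechet_derivative (\<lambda>y. snd (A y)) (at x) (1, 0)
           - frechet_derivative (\<lambda>y. fst (A y)) (at x) (0, 1)"

definition tdot :: "(real \<Rightarrow> real \<times> real \<Rightarrow> 'b::real_normed_vector) \<Rightarrow> real \<Rightarrow> real \<times> real \<Rightarrow> 'b" where
  "tdot A t x = vector_derivative (\<lambda>s. A s x) (at t)"

definition J0 :: "real \<times> real \<Rightarrow> real \<times> real" where
  "J0 v = (- snd v, fst v)"

definition oint :: "real \<Rightarrow> real \<Rightarrow> (real \<Rightarrow> 'b::euclidean_space) \<Rightarrow> 'b" where
  "oint a b f = (if a \<le> b then integral {a..b} f else - integral {b..a} f)"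

definition twisted_periodic_vp :: "(real \<times> real) set \<Rightarrow> (real \<Rightarrow> real \<times> real \<Rightarrow> real \<times> real) \<Rightarrow> bool" where
  "twisted_periodic_vp Q A \<longleftrightarrow>
     smooth_on (UNIV \<times> Q) (\<lambda>p. A (fst p) (snd p)) \<and>
     (\<forall>t. \<forall>x\<in>Q. tdot A (t + 1) x = tdot A t x) \<and>
     (\<forall>t. \<forall>x\<in>Q. rot (A (t + 1)) x = rot (A t) x) \<and>
     (\<exists>f :: real \<Rightarrow> real \<times> real \<Rightarrow> real.
        smooth_on (UNIV \<times> Q) (\<lambda>p. f (fst p) (snd p)) \<and>
        (\<forall>t. \<forall>x\<in>Q. A (t + 1) x - A t x = grad (f t) x))"

definition Aphi :: "(real \<Rightarrow> real \<times> real \<Rightarrow> real \<times> real) \<Rightarrow> (real \<Rightarrow> real \<times> real \<Rightarrow> real)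
                    \<Rightarrow> real \<Rightarrow> real \<times> real \<Rightarrow> real \<times> real" where
  "Aphi A \<phi> t x = A t x + oint 0 t (\<lambda>s. grad (\<phi> s) x)"

definition solves_eq :: "(real \<Rightarrow> real \<times> real \<Rightarrow> real \<times> real) \<Rightarrow> (real \<Rightarrow> real \<times> real \<Rightarrow> real)
                         \<Rightarrow> (real \<Rightarrow> real \<times> real) \<Rightarrow> real \<Rightarrow> bool" where
  "solves_eq A \<phi> q t \<longleftrightarrow>
     vector_derivative (\<lambda>s. vector_derivative q (at s)) (at t)
       = - (rot (A t) (q t)) *\<^sub>R J0 (vector_derivative q (at t)) - tdot A t (q t) - grad (\<phi> t) (q t)"

end

theory Submission
  imports Defs
begin

text \<open>
  Differentiating (A^phi)_t = A_t + int_0^t grad phi_s ds in t adds grad phi_t to the time derivative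
  of the potential, which is exactly the change turning the (A, phi)-equation into the (A^phi, 0)-equation.
  The added term is an integral of gradients, so by the symmetry of second derivatives of phi it has
  zero curl and rot is unchanged. By periodicity of phi its increment over one period is
  int_0^1 grad phi_s ds, the gradient of the time average of phi, which is absorbed into the twist f.
  Finally (t, x) |-> int_0^t k(s, x) ds is smooth for smooth k, because each of its iterated
  derivatives again has the form h + int_0^t k'(s, x) ds with h and k' smooth.
\<close>

section \<open>Smooth functions\<close>

lemma frechet_derivative_cong_open:
  assumes "open S" "x \<in> S" "\<And>y. y \<in> S \<Longrightarrow> f y = g y"
  shows "frechet_derivative f (at x) = frechet_derivative g (at x)"
proof -
  have "(f has_derivative D) (at x) \<longleftrightarrow> (g has_derivative D) (at x)" for D
    using has_derivative_transform_within_open[OF _ assms(1,2)] assms(3) by metis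
  then show ?thesis unfolding frechet_derivative_def by simp
qed

lemma iter_dderiv_cong_open:
  assumes "open S" "\<And>y. y \<in> S \<Longrightarrow> f y = g y" "x \<in> S"
  shows "iter_dderiv vs f x = iter_dderiv vs g x"
  using assms(3)
proof (induction vs arbitrary: x)
  case (Cons v vs)
  then show ?case by (simp add: frechet_derivative_cong_open[OF assms(1) Cons.prems Cons.IH])
qed (simp add: assms(2))

lemma differentiable_on_cong:
  assumes "\<And>y. y \<in> S \<Longrightarrow> f y = g y" "f differentiable_on S"
  shows "g differentiable_on S"
  using assms differentiable_transform_within[OF _ zero_less_one]
  unfolding differentiable_on_def by metis

lemma smooth_on_cong:
  assumes "open S" "\<And>y. y \<in> S \<Longrightarrow> f y = g y" "smooth_on S f"
  shows "smooth_on S g"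
  unfolding smooth_on_def
proof
  fix vs
  have "iter_dderiv vs f differentiable_on S"
    using assms(3) smooth_on_def by blast
  then show "iter_dderiv vs g differentiable_on S"
    by (rule differentiable_on_cong[rotated]) (simp add: iter_dderiv_cong_open[OF assms(1,2)])
qed

lemma smooth_on_imp_differentiable_on: "smooth_on S f \<Longrightarrow> f differentiable_on S"
  by (metis iter_dderiv.simps(1) smooth_on_def)

lemma smooth_on_imp_differentiable_at:
  "smooth_on S f \<Longrightarrow> open S \<Longrightarrow> x \<in> S \<Longrightarrow> f differentiable at x"
  by (metis differentiable_on_eq_differentiable_at smooth_on_imp_differentiable_on)

lemma smooth_on_imp_continuous_on: "smooth_on S f \<Longrightarrow> continuous_on S f"
  by (simp add: differentiable_imp_continuous_on smooth_on_imp_differentiable_on)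

lemma iter_dderiv_append: "iter_dderiv (us @ vs) f = iter_dderiv us (iter_dderiv vs f)"
  by (induction us) auto

lemma smooth_on_iter_dderiv: "smooth_on S f \<Longrightarrow> smooth_on S (iter_dderiv vs f)"
  by (simp add: smooth_on_def iter_dderiv_append[symmetric])

lemma smooth_on_dderiv: "smooth_on S f \<Longrightarrow> smooth_on S (\<lambda>x. frechet_derivative f (at x) v)"
  using smooth_on_iter_dderiv[of S f "[v]"] by simp

lemma smooth_on_zero: "smooth_on S (\<lambda>_::'a::real_normed_vector. 0::'b::real_normed_vector)"
proof -
  have "iter_dderiv vs (\<lambda>_::'a. 0::'b) = (\<lambda>_. 0)" for vs
    by (induction vs) auto
  then show ?thesis by (simp add: smooth_on_def differentiable_on_const)
qed

lemma smooth_on_linear_combination: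
  assumes f: "smooth_on S f" and g: "smooth_on S g" and "open S"
    and L: "bounded_linear L" and M: "bounded_linear M"
  shows "smooth_on S (\<lambda>x. L (f x) + M (g x))"
proof -
  have deriv: "((\<lambda>x. L (iter_dderiv vs f x) + M (iter_dderiv vs g x)) has_derivative
      (\<lambda>h. L (frechet_derivative (iter_dderiv vs f) (at x) h)
         + M (frechet_derivative (iter_dderiv vs g) (at x) h))) (at x)" if "x \<in> S" for vs x
    using that \<open>open S\<close> smooth_on_iter_dderiv[OF f] smooth_on_iter_dderiv[OF g]
    by (intro has_derivative_add bounded_linear.has_derivative[OF L] bounded_linear.has_derivative[OF M]
        frechet_derivative_works[THEN iffD1] smooth_on_imp_differentiable_at)
  have iter: "iter_dderiv vs (\<lambda>x. L (f x) + M (g x)) x = L (iter_dderiv vs f x) + M (iter_dderiv vs g x)"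
    if "x \<in> S" for vs x
    using that
  proof (induction vs arbitrary: x)
    case (Cons v vs)
    then show ?case
      by (simp add: frechet_derivative_cong_open[OF \<open>open S\<close> Cons.prems Cons.IH]
          frechet_derivative_at[OF deriv[OF Cons.prems], symmetric])
  qed simp
  show ?thesis
    unfolding smooth_on_def differentiable_on_eq_differentiable_at[OF \<open>open S\<close>]
  proof (intro allI ballI)
    fix vs x assume "x \<in> S"
    have "(iter_dderiv vs (\<lambda>x. L (f x) + M (g x)) has_derivative
        (\<lambda>h. L (frechet_derivative (iter_dderiv vs f) (at x) h)
           + M (frechet_derivative (iter_dderiv vs g) (at x) h))) (at x)"
      by (rule has_derivative_transform_within_open[OF deriv \<open>open S\<close>]) (use \<open>x \<in> S\<close> iter in auto)
    then show "iter_dderiv vs (\<lambda>x. L (f x) + M (g x)) differentiable at x"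
      by (rule differentiableI)
  qed
qed

lemma smooth_on_add:
  "smooth_on S f \<Longrightarrow> smooth_on S g \<Longrightarrow> open S \<Longrightarrow> smooth_on S (\<lambda>x. f x + g x)"
  using smooth_on_linear_combination[OF _ _ _ bounded_linear_ident bounded_linear_ident] .

lemma smooth_on_scaleR: "smooth_on S f \<Longrightarrow> open S \<Longrightarrow> smooth_on S (\<lambda>x. c *\<^sub>R f x)"
  using smooth_on_linear_combination[OF _ smooth_on_zero _ bounded_linear_scaleR_right bounded_linear_zero]
  by simp

lemma smooth_on_Pair:
  "smooth_on S f \<Longrightarrow> smooth_on S g \<Longrightarrow> open S \<Longrightarrow> smooth_on S (\<lambda>x. (f x, g x))"
  using smooth_on_linear_combination[OF _ _ _
      bounded_linear_Pair[OF bounded_linear_ident bounded_linear_zero]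
      bounded_linear_Pair[OF bounded_linear_zero bounded_linear_ident]]
  by simp

lemma smooth_on_compose_affine:
  assumes f: "smooth_on S f" and "open S" "open T"
    and L: "bounded_linear L" and maps: "\<And>x. x \<in> T \<Longrightarrow> L x + c \<in> S"
  shows "smooth_on T (\<lambda>x. f (L x + c))"
proof -
  have deriv: "((\<lambda>x. iter_dderiv vs f (L x + c)) has_derivative
      (\<lambda>h. frechet_derivative (iter_dderiv vs f) (at (L x + c)) (L h))) (at x)" if "x \<in> T" for vs x
  proof -
    have "((\<lambda>x. L x + c) has_derivative L) (at x)"
      using L by (intro has_derivative_add_const bounded_linear_imp_has_derivative)
    from diff_chain_at[OF this frechet_derivative_works[THEN iffD1,
          OF smooth_on_imp_differentiable_at[OF smooth_on_iter_dderiv[OF f] \<open>open S\<close> maps[OF that]]]]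
    show ?thesis by (simp add: o_def)
  qed
  have iter: "iter_dderiv vs (\<lambda>x. f (L x + c)) x = iter_dderiv (map L vs) f (L x + c)"
    if "x \<in> T" for vs x
    using that
  proof (induction vs arbitrary: x)
    case (Cons v vs)
    then show ?case
      by (simp add: frechet_derivative_cong_open[OF \<open>open T\<close> Cons.prems Cons.IH]
          frechet_derivative_at[OF deriv[OF Cons.prems], symmetric])
  qed simp
  show ?thesis
    unfolding smooth_on_def differentiable_on_eq_differentiable_at[OF \<open>open T\<close>]
  proof (intro allI ballI)
    fix vs x assume "x \<in> T"
    have "(iter_dderiv vs (\<lambda>x. f (L x + c)) has_derivative
        (\<lambda>h. frechet_derivative (iter_dderiv (map L vs) f) (at (L x + c)) (L h))) (at x)"
      by (rule has_derivative_transform_within_open[OF deriv \<open>open T\<close>]) (use \<open>x \<in> T\<close> iter in auto)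
    then show "iter_dderiv vs (\<lambda>x. f (L x + c)) differentiable at x"
      by (rule differentiableI)
  qed
qed

section \<open>Oriented integrals\<close>

lemma oint_eq_integral_diff:
  fixes g :: "real \<Rightarrow> 'b::euclidean_space"
  assumes g: "continuous_on {c..d} g" and "a \<in> {c..d}" "u \<in> {c..d}"
  shows "oint a u g = integral {c..u} g - integral {c..a} g"
proof (cases "a \<le> u")
  case True
  have "integral {c..a} g + integral {a..u} g = integral {c..u} g"
    using assms True
    by (intro Henstock_Kurzweil_Integration.integral_combine integrable_continuous_real
        continuous_on_subset[OF g]) auto
  then show ?thesis using True unfolding oint_def by (simp add: algebra_simps)
next
  case False
  have "integral {c..u} g + integral {u..a} g = integral {c..a} g"
    using assms False
    by (intro Henstock_Kurzweil_Integration.integral_combine integrable_continuous_real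
        continuous_on_subset[OF g]) auto
  then show ?thesis using False unfolding oint_def by (simp add: algebra_simps)
qed

lemma oint_self [simp]: "oint a a g = 0"
  by (simp add: oint_def)

lemma oint_has_vector_derivative:
  fixes g :: "real \<Rightarrow> 'b::euclidean_space"
  assumes g: "continuous_on T g" and "open T" "convex T" "a \<in> T" "t \<in> T"
  shows "((\<lambda>u. oint a u g) has_vector_derivative g t) (at t)"
proof -
  obtain e where e: "e > 0" "ball t e \<subseteq> T"
    using \<open>open T\<close> \<open>t \<in> T\<close> openE by blast
  define c where "c = min a (t - e / 2)"
  define d where "d = max a (t + e / 2)"
  have "c \<in> T" "d \<in> T" "c \<le> d"
    using e \<open>a \<in> T\<close> by (auto simp: c_def d_def min_def max_def dist_real_def)
  then have "{c..d} \<subseteq> T"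
    using closed_segment_subset[OF \<open>c \<in> T\<close> \<open>d \<in> T\<close> \<open>convex T\<close>]
    by (simp add: closed_segment_eq_real_ivl)
  then have gcd: "continuous_on {c..d} g"
    using continuous_on_subset[OF g] by blast
  have t: "t \<in> {c<..<d}" and a: "a \<in> {c..d}"
    using e by (auto simp: c_def d_def)
  have "((\<lambda>u. integral {c..u} g) has_vector_derivative g t) (at t within {c..d})"
    using integral_has_vector_derivative[OF gcd] t by simp
  then have "((\<lambda>u. integral {c..u} g) has_vector_derivative g t) (at t)"
    using t by (simp add: at_within_Icc_at)
  then have "((\<lambda>u. integral {c..u} g - integral {c..a} g) has_vector_derivative g t) (at t)"
    using has_vector_derivative_diff[OF _ has_vector_derivative_const] by fastforce
  then show ?thesis
    by (rule has_vector_derivative_transform_within_open[OF _ open_greaterThanLessThan t])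
       (simp add: oint_eq_integral_diff[OF gcd a])
qed

lemma oint_linear:
  fixes g :: "real \<Rightarrow> 'b::euclidean_space" and L :: "'b \<Rightarrow> 'c::euclidean_space"
  assumes L: "bounded_linear L" and g: "continuous_on (closed_segment a b) g"
  shows "L (oint a b g) = oint a b (\<lambda>s. L (g s))"
proof -
  have integrable: "g integrable_on closed_segment a b"
    using g integrable_continuous_closed_segment by blast
  show ?thesis
  proof (cases "a \<le> b")
    case True
    then show ?thesis
      using integral_linear[OF _ L, of g] integrable by (simp add: oint_def closed_segment_eq_real_ivl o_def)
  next
    case False
    then show ?thesis
      using integral_linear[OF _ L, of g] integrable linear_neg[OF bounded_linear.linear[OF L]]
      by (simp add: oint_def closed_segment_eq_real_ivl o_def)
  qed
qed

lemma oint_shift_periodic: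
  fixes g :: "real \<Rightarrow> 'b::euclidean_space"
  assumes g: "continuous_on UNIV g" and periodic: "\<And>s. g (s + 1) = g s"
  shows "oint 0 (t + 1) g - oint 0 t g = oint 0 1 g"
proof -
  note ftc = oint_has_vector_derivative[OF g open_UNIV convex_UNIV UNIV_I UNIV_I]
  have "((\<lambda>t. oint 0 (t + 1) g - oint 0 t g) has_derivative (\<lambda>h. 0)) (at x within UNIV)" for x
  proof -
    have "((\<lambda>t. t + 1) has_vector_derivative 1) (at x)"
      by (auto intro!: derivative_eq_intros)
    from vector_diff_chain_at[OF this ftc]
    have "((\<lambda>t. oint 0 (t + 1) g) has_vector_derivative g x) (at x)"
      by (simp add: o_def periodic)
    from has_vector_derivative_diff[OF this ftc] show ?thesis
      by (simp add: has_vector_derivative_def)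
  qed
  from has_derivative_zero_unique[OF convex_UNIV this, of t 0] show ?thesis
    by simp
qed

lemma oint_leibniz:
  fixes K :: "real \<Rightarrow> 'p::euclidean_space \<Rightarrow> 'b::euclidean_space"
    and KD :: "real \<Rightarrow> 'p \<Rightarrow> 'p \<Rightarrow>\<^sub>L 'b"
  assumes "open U" "y0 \<in> U"
    and der: "\<And>s y. s \<in> closed_segment a b \<Longrightarrow> y \<in> U \<Longrightarrow> (K s has_derivative KD s y) (at y)"
    and cont: "continuous_on (U \<times> closed_segment a b) (\<lambda>(y, s). KD s y)"
    and contK: "\<And>y. y \<in> U \<Longrightarrow> continuous_on (closed_segment a b) (\<lambda>s. K s y)"
  shows "((\<lambda>y. oint a b (\<lambda>s. K s y)) has_derivative (\<lambda>v. oint a b (\<lambda>s. KD s y0 v))) (at y0)"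
proof -
  obtain r where r: "r > 0" "ball y0 r \<subseteq> U"
    using \<open>open U\<close> \<open>y0 \<in> U\<close> openE by blast
  have integral: "((\<lambda>y. integral {c..d} (\<lambda>s. K s y)) has_derivative
      (\<lambda>v. integral {c..d} (\<lambda>s. KD s y0 v))) (at y0)"
    if cd: "closed_segment a b = {c..d}" for c d
  proof -
    have "((\<lambda>y. integral (cbox c d) (\<lambda>s. K s y)) has_derivative integral (cbox c d) (\<lambda>s. KD s y0))
        (at y0 within ball y0 r)"
    proof (rule leibniz_rule)
      show "((\<lambda>y. K s y) has_derivative KD s y) (at y within ball y0 r)"
        if "y \<in> ball y0 r" "s \<in> cbox c d" for y s
      proof -
        have "y \<in> U" using that r by auto
        moreover have "s \<in> closed_segment a b" using that cd by auto
        ultimately show ?thesis using der[of s y] by (auto intro: has_derivative_at_withinI)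
      qed
      show "(\<lambda>s. K s y) integrable_on cbox c d" if "y \<in> ball y0 r" for y
      proof -
        have "y \<in> U" using that r by auto
        then show ?thesis using contK[of y] cd integrable_continuous_real by simp
      qed
      show "continuous_on (ball y0 r \<times> cbox c d) (\<lambda>(y, s). KD s y)"
        by (rule continuous_on_subset[OF cont]) (use r cd in auto)
    qed (use r in auto)
    moreover have "(\<lambda>s. KD s y0) integrable_on {c..d}"
      using \<open>y0 \<in> U\<close> cd
      by (intro integrable_continuous_real continuous_on_compose2[OF cont, of _ "\<lambda>s. (y0, s)", simplified])
        (auto intro!: continuous_intros)
    then have "blinfun_apply (integral {c..d} (\<lambda>s. KD s y0)) = (\<lambda>v. integral {c..d} (\<lambda>s. KD s y0 v))"
      by (intro ext blinfun_apply_integral)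
    ultimately show ?thesis
      using r at_within_open[of y0 "ball y0 r"] by simp
  qed
  show ?thesis
  proof (cases "a \<le> b")
    case True
    then show ?thesis using integral[of a b] by (simp add: oint_def closed_segment_eq_real_ivl)
  next
    case False
    then show ?thesis
      using has_derivative_minus[OF integral[of b a]] by (simp add: oint_def closed_segment_eq_real_ivl)
  qed
qed

lemma oint_has_vector_derivative_param:
  fixes K KD :: "real \<Rightarrow> real \<Rightarrow> 'b::euclidean_space"
  assumes "open U" "b0 \<in> U"
    and der: "\<And>s b. s \<in> closed_segment a c \<Longrightarrow> b \<in> U \<Longrightarrow> (K s has_vector_derivative KD s b) (at b)"
    and cont: "continuous_on (U \<times> closed_segment a c) (\<lambda>(b, s). KD s b)"
    and contK: "\<And>b. b \<in> U \<Longrightarrow> continuous_on (closed_segment a c) (\<lambda>s. K s b)"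
  shows "((\<lambda>b. oint a c (\<lambda>s. K s b)) has_vector_derivative oint a c (\<lambda>s. KD s b0)) (at b0)"
proof -
  have "((\<lambda>b. oint a c (\<lambda>s. K s b)) has_derivative (\<lambda>v. oint a c (\<lambda>s. v *\<^sub>R KD s b0))) (at b0)"
  proof (rule oint_leibniz[where KD = "\<lambda>s b. blinfun_scaleR_left (KD s b)", simplified])
    show "continuous_on (U \<times> closed_segment a c) (\<lambda>(b, s). blinfun_scaleR_left (KD s b))"
      using bounded_linear.continuous_on[OF bounded_linear_blinfun_scaleR_left cont]
      by (simp add: case_prod_unfold)
  qed (use assms in \<open>auto simp: has_vector_derivative_def\<close>)
  moreover have "continuous_on (closed_segment a c) (\<lambda>s. KD s b0)"
    using \<open>b0 \<in> U\<close>
    by (intro continuous_on_compose2[OF cont, of _ "\<lambda>s. (b0, s)", simplified]) (auto intro!: continuous_intros)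
  ultimately show ?thesis
    by (simp add: has_vector_derivative_def oint_linear[OF bounded_linear_scaleR_right, symmetric])
qed

section \<open>Functions on space-time\<close>

lemma has_derivative_slice_snd:
  assumes "k differentiable at (s, y)"
  shows "((\<lambda>y. k (s, y)) has_derivative (\<lambda>v. frechet_derivative k (at (s, y)) (0, v))) (at y)"
proof -
  have "((\<lambda>y. (s, y)) has_derivative (\<lambda>v. (0, v))) (at y)"
    by (auto intro!: derivative_eq_intros)
  from diff_chain_at[OF this frechet_derivative_works[THEN iffD1, OF assms]] show ?thesis
    by (simp add: o_def)
qed

lemma differentiable_slice_fst:
  assumes "k differentiable at (t, y)"
  shows "(\<lambda>s. k (s, y)) differentiable at t"
proof -
  have "((\<lambda>s. (s, y)) has_derivative (\<lambda>h. (h, 0))) (at t)"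
    by (auto intro!: derivative_eq_intros)
  from diff_chain_at[OF this frechet_derivative_works[THEN iffD1, OF assms]] show ?thesis
    unfolding o_def by (rule differentiableI)
qed

lemma differentiable_slice_snd:
  "k differentiable at (s, y) \<Longrightarrow> (\<lambda>y. k (s, y)) differentiable at y"
  by (rule differentiableI[OF has_derivative_slice_snd])

lemma continuous_on_slice_fst:
  assumes "continuous_on (UNIV \<times> Q) k" "y \<in> Q"
  shows "continuous_on UNIV (\<lambda>s. k (s, y))"
  using assms by (intro continuous_on_compose2[OF assms(1)]) (auto intro!: continuous_intros)

lemma has_derivative_oint_slice:
  fixes k :: "real \<times> 'x::euclidean_space \<Rightarrow> 'b::euclidean_space"
  assumes k: "smooth_on (UNIV \<times> Q) k" and "open Q" "y0 \<in> Q"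
  shows "((\<lambda>y. oint a b (\<lambda>s. k (s, y))) has_derivative
      (\<lambda>v. oint a b (\<lambda>s. frechet_derivative k (at (s, y0)) (0, v)))) (at y0)"
proof -
  have S: "open (UNIV \<times> Q)" using \<open>open Q\<close> by (simp add: open_Times)
  define KD where "KD s y = Blinfun (\<lambda>v. frechet_derivative k (at (s, y)) (0, v))" for s y
  have partial: "((\<lambda>y. k (s, y)) has_derivative (\<lambda>v. frechet_derivative k (at (s, y)) (0, v))) (at y)"
    if "y \<in> Q" for s y
    using that by (intro has_derivative_slice_snd smooth_on_imp_differentiable_at[OF k S]) simp
  have KD: "blinfun_apply (KD s y) = (\<lambda>v. frechet_derivative k (at (s, y)) (0, v))" if "y \<in> Q" for s y
    unfolding KD_def using partial[OF that]
    by (intro bounded_linear_Blinfun_apply has_derivative_bounded_linear)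
  have "((\<lambda>y. oint a b (\<lambda>s. k (s, y))) has_derivative (\<lambda>v. oint a b (\<lambda>s. KD s y0 v))) (at y0)"
  proof (rule oint_leibniz[OF \<open>open Q\<close> \<open>y0 \<in> Q\<close>])
    show "((\<lambda>y. k (s, y)) has_derivative KD s y) (at y)" if "s \<in> closed_segment a b" "y \<in> Q" for s y
      using partial[OF that(2)] KD[OF that(2)] by simp
    show "continuous_on (Q \<times> closed_segment a b) (\<lambda>(y, s). KD s y)"
    proof (rule continuous_on_blinfun_componentwise)
      fix i :: 'x
      have "continuous_on (UNIV \<times> Q) (\<lambda>p. frechet_derivative k (at p) (0, i))"
        by (rule smooth_on_imp_continuous_on[OF smooth_on_dderiv[OF k]])
      then have "continuous_on (Q \<times> closed_segment a b) (\<lambda>z. frechet_derivative k (at (snd z, fst z)) (0, i))"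
        by (rule continuous_on_compose2) (auto intro!: continuous_intros)
      then show "continuous_on (Q \<times> closed_segment a b) (\<lambda>z. blinfun_apply (case z of (y, s) \<Rightarrow> KD s y) i)"
        by (rule continuous_on_eq) (auto simp: KD)
    qed
    show "continuous_on (closed_segment a b) (\<lambda>s. k (s, y))" if "y \<in> Q" for y
      using continuous_on_slice_fst[OF smooth_on_imp_continuous_on[OF k] that] continuous_on_subset
      by blast
  qed
  then show ?thesis
    using KD[OF \<open>y0 \<in> Q\<close>] by simp
qed

definition time_primitive :: "(real \<times> 'x \<Rightarrow> 'b::euclidean_space) \<Rightarrow> real \<times> 'x \<Rightarrow> 'b" where
  "time_primitive k p = oint 0 (fst p) (\<lambda>s. k (s, snd p))"

lemma has_derivative_time_primitive:
  fixes k :: "real \<times> 'x::euclidean_space \<Rightarrow> 'b::euclidean_space"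
  assumes k: "smooth_on (UNIV \<times> Q) k" and "open Q" and p: "p \<in> UNIV \<times> Q"
  shows "(time_primitive k has_derivative
      (\<lambda>w. fst w *\<^sub>R k p + time_primitive (\<lambda>q. frechet_derivative k (at q) (0, snd w)) p)) (at p)"
proof -
  obtain t0 y0 where p_eq: "p = (t0, y0)" and y0: "y0 \<in> Q"
    using p by (cases p) auto
  have S: "open (UNIV \<times> Q)" using \<open>open Q\<close> by (simp add: open_Times)
  define F where "F y t = oint 0 t (\<lambda>s. k (s, y))" for y t
  \<comment> \<open>Time comes second: has_derivative_partialsI needs the second variable to range over a convex set.\<close>
  have "((\<lambda>(y, t). F y t) has_derivative
      (\<lambda>(v, \<tau>). oint 0 t0 (\<lambda>s. frechet_derivative k (at (s, y0)) (0, v)) + \<tau> *\<^sub>R k (t0, y0)))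
      (at (y0, t0) within Q \<times> UNIV)"
  proof (rule has_derivative_partialsI[where fy = "\<lambda>y t. blinfun_scaleR_left (k (t, y))", simplified])
    show "((\<lambda>y. F y t0) has_derivative (\<lambda>v. oint 0 t0 (\<lambda>s. frechet_derivative k (at (s, y0)) (0, v))))
        (at y0 within Q)"
      unfolding F_def by (rule has_derivative_at_withinI[OF has_derivative_oint_slice[OF k \<open>open Q\<close> y0]])
    show "((\<lambda>t. F y t) has_derivative (\<lambda>\<tau>. \<tau> *\<^sub>R k (t, y))) (at t)" if "y \<in> Q" for y t
      using oint_has_vector_derivative[OF continuous_on_slice_fst[OF smooth_on_imp_continuous_on[OF k] that]]
      unfolding F_def has_vector_derivative_def by simp
    have "k differentiable at (t0, y0)"
      using smooth_on_imp_differentiable_at[OF k S] y0 by simp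
    then have "continuous (at (t0, y0)) k"
      by (rule differentiable_imp_continuous_within)
    then have "continuous (at (y0, t0)) (\<lambda>z. blinfun_scaleR_left (k (snd z, fst z)))"
      by (intro bounded_linear.continuous[OF bounded_linear_blinfun_scaleR_left]
          continuous_at_compose[of _ "\<lambda>z. (snd z, fst z)", unfolded o_def, simplified]) (auto intro!: continuous_intros)
    then show "continuous (at (y0, t0) within Q \<times> UNIV) (\<lambda>(y, t). blinfun_scaleR_left (k (t, y)))"
      by (simp add: continuous_at_imp_continuous_within case_prod_unfold)
  qed (use y0 in auto)
  moreover have "at (y0, t0) within Q \<times> UNIV = at (y0, t0)"
    using y0 \<open>open Q\<close> by (intro at_within_open) (auto simp: open_Times)
  ultimately have "((\<lambda>(y, t). F y t) \<circ> (\<lambda>p. (snd p, fst p)) has_derivative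
      (\<lambda>(v, \<tau>). oint 0 t0 (\<lambda>s. frechet_derivative k (at (s, y0)) (0, v)) + \<tau> *\<^sub>R k (t0, y0))
        \<circ> (\<lambda>w. (snd w, fst w))) (at p)"
    using p_eq by (intro diff_chain_at) (auto intro!: derivative_eq_intros)
  then show ?thesis
    by (simp add: o_def F_def time_primitive_def[abs_def] p_eq case_prod_unfold add.commute)
qed

lemma has_derivative_add_time_primitive:
  fixes h k :: "real \<times> 'x::euclidean_space \<Rightarrow> 'b::euclidean_space"
  assumes h: "smooth_on (UNIV \<times> Q) h" and k: "smooth_on (UNIV \<times> Q) k" and "open Q"
    and F: "\<And>p. p \<in> UNIV \<times> Q \<Longrightarrow> F p = h p + time_primitive k p" and p: "p \<in> UNIV \<times> Q"
  shows "(F has_derivative (\<lambda>w. frechet_derivative h (at p) w + fst w *\<^sub>R k p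
      + time_primitive (\<lambda>q. frechet_derivative k (at q) (0, snd w)) p)) (at p)"
proof -
  have S: "open (UNIV \<times> Q)" using \<open>open Q\<close> by (simp add: open_Times)
  have "((\<lambda>p. h p + time_primitive k p) has_derivative (\<lambda>w. frechet_derivative h (at p) w
      + (fst w *\<^sub>R k p + time_primitive (\<lambda>q. frechet_derivative k (at q) (0, snd w)) p))) (at p)"
    using smooth_on_imp_differentiable_at[OF h S p]
    by (intro has_derivative_add has_derivative_time_primitive[OF k \<open>open Q\<close> p])
      (simp add: frechet_derivative_works)
  then have "((\<lambda>p. h p + time_primitive k p) has_derivative (\<lambda>w. frechet_derivative h (at p) w
      + fst w *\<^sub>R k p + time_primitive (\<lambda>q. frechet_derivative k (at q) (0, snd w)) p)) (at p)"
    by (simp add: add.assoc)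
  then show ?thesis
    by (rule has_derivative_transform_within_open[OF _ S p]) (simp add: F)
qed

lemma smooth_on_time_primitive:
  fixes k :: "real \<times> 'x::euclidean_space \<Rightarrow> 'b::euclidean_space"
  assumes k: "smooth_on (UNIV \<times> Q) k" and "open Q"
  shows "smooth_on (UNIV \<times> Q) (time_primitive k)"
proof -
  have S: "open (UNIV \<times> Q)" using \<open>open Q\<close> by (simp add: open_Times)
  have representation: "\<exists>h k'. smooth_on (UNIV \<times> Q) h \<and> smooth_on (UNIV \<times> Q) (k' :: real \<times> 'x \<Rightarrow> 'b) \<and>
      (\<forall>p\<in>UNIV \<times> Q. iter_dderiv vs (time_primitive k) p = h p + time_primitive k' p)" for vs
  proof (induction vs)
    case Nil
    show ?case using k smooth_on_zero by fastforce
  next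
    case (Cons w vs)
    then obtain h k' where h: "smooth_on (UNIV \<times> Q) h" and k': "smooth_on (UNIV \<times> Q) k'"
      and F: "\<And>p. p \<in> UNIV \<times> Q \<Longrightarrow> iter_dderiv vs (time_primitive k) p = h p + time_primitive k' p"
      by blast
    have "iter_dderiv (w # vs) (time_primitive k) p = (frechet_derivative h (at p) w + fst w *\<^sub>R k' p)
        + time_primitive (\<lambda>q. frechet_derivative k' (at q) (0, snd w)) p" if "p \<in> UNIV \<times> Q" for p
      using frechet_derivative_at[OF has_derivative_add_time_primitive[OF h k' \<open>open Q\<close> F that], symmetric]
      by simp
    moreover have "smooth_on (UNIV \<times> Q) (\<lambda>p. frechet_derivative h (at p) w + fst w *\<^sub>R k' p)"
      by (intro smooth_on_add smooth_on_dderiv smooth_on_scaleR h k' S)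
    ultimately show ?case
      using smooth_on_dderiv[OF k'] by blast
  qed
  show ?thesis
    unfolding smooth_on_def differentiable_on_eq_differentiable_at[OF S]
  proof (intro allI ballI)
    fix vs and p :: "real \<times> 'x" assume "p \<in> UNIV \<times> Q"
    obtain h k' where "smooth_on (UNIV \<times> Q) h" "smooth_on (UNIV \<times> Q) (k' :: real \<times> 'x \<Rightarrow> 'b)"
      and "\<forall>p\<in>UNIV \<times> Q. iter_dderiv vs (time_primitive k) p = h p + time_primitive k' p"
      using representation by blast
    then show "iter_dderiv vs (time_primitive k) differentiable at p"
      using \<open>open Q\<close> \<open>p \<in> UNIV \<times> Q\<close>
      by (intro differentiableI[OF has_derivative_add_time_primitive[where h = h and k = k']]) auto
  qed
qed

lemma smooth_on_oint_slice:
  fixes k :: "real \<times> 'x::euclidean_space \<Rightarrow> 'b::euclidean_space"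
  assumes k: "smooth_on (UNIV \<times> Q) k" and "open Q"
  shows "smooth_on (UNIV \<times> Q) (\<lambda>p. oint 0 b (\<lambda>s. k (s, snd p)))"
proof -
  have S: "open (UNIV \<times> Q)" using \<open>open Q\<close> by (simp add: open_Times)
  have "smooth_on (UNIV \<times> Q) (\<lambda>p. time_primitive k ((0, snd p) + (b, 0)))"
    by (rule smooth_on_compose_affine[OF smooth_on_time_primitive[OF k \<open>open Q\<close>] S S
          bounded_linear_Pair[OF bounded_linear_zero bounded_linear_snd]]) auto
  then show ?thesis
    by (simp add: time_primitive_def)
qed

section \<open>Symmetry of second derivatives\<close>

lemma has_vector_derivative_along_line:
  assumes "F differentiable at (x + a *\<^sub>R u)"
  shows "((\<lambda>a. F (x + a *\<^sub>R u)) has_vector_derivative frechet_derivative F (at (x + a *\<^sub>R u)) u) (at a)"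
proof -
  note F' = frechet_derivative_works[THEN iffD1, OF assms]
  have "((\<lambda>a. x + a *\<^sub>R u) has_derivative (\<lambda>h. h *\<^sub>R u)) (at a)"
    by (auto intro!: derivative_eq_intros)
  from diff_chain_at[OF this F'] show ?thesis
    by (simp add: has_vector_derivative_def o_def linear_cmul[OF has_derivative_linear[OF F']])
qed

lemma open_contains_plane_neighbourhood:
  fixes p u w :: "'a::real_normed_vector"
  assumes "open S" "p \<in> S"
  obtains d where "d > 0" "\<And>a b. \<bar>a\<bar> < d \<Longrightarrow> \<bar>b\<bar> < d \<Longrightarrow> p + a *\<^sub>R u + b *\<^sub>R w \<in> S"
proof -
  have "open ((\<lambda>z::real \<times> real. p + fst z *\<^sub>R u + snd z *\<^sub>R w) -` S)"
    using \<open>open S\<close> by (intro continuous_open_vimage) (auto intro!: continuous_intros)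
  moreover have "(0, 0) \<in> (\<lambda>z::real \<times> real. p + fst z *\<^sub>R u + snd z *\<^sub>R w) -` S"
    using \<open>p \<in> S\<close> by simp
  ultimately obtain e where e: "e > 0" "ball (0, 0) e \<subseteq> (\<lambda>z::real \<times> real. p + fst z *\<^sub>R u + snd z *\<^sub>R w) -` S"
    using openE by blast
  show ?thesis
  proof (rule that[of "e / 2"])
    fix a b :: real assume "\<bar>a\<bar> < e / 2" "\<bar>b\<bar> < e / 2"
    then have "(a, b) \<in> ball (0, 0) e"
      using norm_Pair_le[of "-a" "-b"] by (simp add: dist_norm)
    then show "p + a *\<^sub>R u + b *\<^sub>R w \<in> S"
      using e by auto
  qed (use e in simp)
qed

lemma increment_along_line:
  fixes F :: "'a::real_normed_vector \<Rightarrow> 'b::euclidean_space"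
  assumes F: "smooth_on S F" and "open S" "open T" "convex T" "0 \<in> T" "a \<in> T"
    and line: "\<And>s. s \<in> T \<Longrightarrow> x + s *\<^sub>R u \<in> S"
  shows "F (x + a *\<^sub>R u) - F x = oint 0 a (\<lambda>s. frechet_derivative F (at (x + s *\<^sub>R u)) u)"
proof -
  have Fu: "continuous_on T (\<lambda>s. frechet_derivative F (at (x + s *\<^sub>R u)) u)"
    by (rule continuous_on_compose2[OF smooth_on_imp_continuous_on[OF smooth_on_dderiv[OF F]]])
      (auto intro!: continuous_intros line)
  have "((\<lambda>s. F (x + s *\<^sub>R u) - oint 0 s (\<lambda>s. frechet_derivative F (at (x + s *\<^sub>R u)) u))
      has_derivative (\<lambda>h. 0)) (at s within T)" if "s \<in> T" for s
  proof -
    have "((\<lambda>s. F (x + s *\<^sub>R u)) has_vector_derivative frechet_derivative F (at (x + s *\<^sub>R u)) u) (at s)"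
      using smooth_on_imp_differentiable_at[OF F \<open>open S\<close> line[OF that]]
      by (rule has_vector_derivative_along_line)
    from has_vector_derivative_diff[OF this oint_has_vector_derivative[OF Fu \<open>open T\<close> \<open>convex T\<close> \<open>0 \<in> T\<close> that]]
    show ?thesis
      by (simp add: has_vector_derivative_def has_derivative_at_withinI)
  qed
  from has_derivative_zero_unique[OF \<open>convex T\<close> this \<open>a \<in> T\<close> \<open>0 \<in> T\<close>] show ?thesis
    by (simp add: algebra_simps)
qed

lemma dderiv_increment_along_line:
  fixes F :: "'a::real_normed_vector \<Rightarrow> 'b::euclidean_space"
  assumes F: "smooth_on S F" and "open S" and T: "open T" "convex T" "0 \<in> T" and "a \<in> T"
    and plane: "\<And>a b. a \<in> T \<Longrightarrow> b \<in> T \<Longrightarrow> p + a *\<^sub>R u + b *\<^sub>R w \<in> S"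
  shows "frechet_derivative F (at (p + a *\<^sub>R u)) w - frechet_derivative F (at p) w
    = oint 0 a (\<lambda>s. iter_dderiv [w, u] F (p + s *\<^sub>R u))"
proof -
  define Fu where "Fu x = frechet_derivative F (at x) u" for x
  define Fuw where "Fuw x = frechet_derivative Fu (at x) w" for x
  have Fu: "smooth_on S Fu"
    unfolding Fu_def[abs_def] by (rule smooth_on_dderiv[OF F])
  have Fuw: "smooth_on S Fuw"
    unfolding Fuw_def[abs_def] by (rule smooth_on_dderiv[OF Fu])
  note differentiable = smooth_on_imp_differentiable_at[OF _ \<open>open S\<close>]
  have "p \<in> S"
    using plane[OF \<open>0 \<in> T\<close> \<open>0 \<in> T\<close>] by simp
  have seg: "closed_segment 0 a \<subseteq> T"
    using closed_segment_subset T \<open>a \<in> T\<close> by blast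
  \<comment> \<open>Differentiate the increment of F along u in the direction w, once directly and once under the integral.\<close>
  have lhs: "((\<lambda>b. F (p + a *\<^sub>R u + b *\<^sub>R w) - F (p + b *\<^sub>R w)) has_vector_derivative
      frechet_derivative F (at (p + a *\<^sub>R u)) w - frechet_derivative F (at p) w) (at 0)"
    using has_vector_derivative_along_line[of F "p + a *\<^sub>R u" 0 w] has_vector_derivative_along_line[of F p 0 w]
      differentiable[OF F plane[OF \<open>a \<in> T\<close> \<open>0 \<in> T\<close>]] differentiable[OF F \<open>p \<in> S\<close>]
    by (auto intro!: has_vector_derivative_diff)
  have increment: "F (p + a *\<^sub>R u + b *\<^sub>R w) - F (p + b *\<^sub>R w) = oint 0 a (\<lambda>s. Fu (p + s *\<^sub>R u + b *\<^sub>R w))"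
    if "b \<in> T" for b
    using increment_along_line[OF F \<open>open S\<close> T \<open>a \<in> T\<close>, of "p + b *\<^sub>R w" u] plane \<open>b \<in> T\<close>
    by (simp add: Fu_def ac_simps)
  have rhs: "((\<lambda>b. oint 0 a (\<lambda>s. Fu (p + s *\<^sub>R u + b *\<^sub>R w))) has_vector_derivative
      oint 0 a (\<lambda>s. Fuw (p + s *\<^sub>R u))) (at 0)"
  proof -
    have "((\<lambda>b. Fu (p + s *\<^sub>R u + b *\<^sub>R w)) has_vector_derivative Fuw (p + s *\<^sub>R u + b *\<^sub>R w)) (at b)"
      if "s \<in> closed_segment 0 a" "b \<in> T" for s b
      using has_vector_derivative_along_line[of Fu "p + s *\<^sub>R u" b w] differentiable[OF Fu plane] that seg
      by (auto simp: Fuw_def)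
    moreover have "continuous_on (T \<times> closed_segment 0 a) (\<lambda>(b, s). Fuw (p + s *\<^sub>R u + b *\<^sub>R w))"
      unfolding case_prod_unfold
      by (rule continuous_on_compose2[OF smooth_on_imp_continuous_on[OF Fuw]])
        (use plane seg in \<open>auto intro!: continuous_intros\<close>)
    moreover have "continuous_on (closed_segment 0 a) (\<lambda>s. Fu (p + s *\<^sub>R u + b *\<^sub>R w))" if "b \<in> T" for b
      by (rule continuous_on_compose2[OF smooth_on_imp_continuous_on[OF Fu]])
        (use plane seg that in \<open>auto intro!: continuous_intros\<close>)
    ultimately show ?thesis
      using oint_has_vector_derivative_param[OF \<open>open T\<close> \<open>0 \<in> T\<close>,
          where K = "\<lambda>s b. Fu (p + s *\<^sub>R u + b *\<^sub>R w)" and KD = "\<lambda>s b. Fuw (p + s *\<^sub>R u + b *\<^sub>R w)"]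
      by simp
  qed
  have "((\<lambda>b. F (p + a *\<^sub>R u + b *\<^sub>R w) - F (p + b *\<^sub>R w)) has_vector_derivative
      oint 0 a (\<lambda>s. Fuw (p + s *\<^sub>R u))) (at 0)"
    by (rule has_vector_derivative_transform_within_open[OF rhs \<open>open T\<close> \<open>0 \<in> T\<close>]) (simp add: increment)
  from vector_derivative_unique_at[OF lhs this] show ?thesis
    by (simp add: Fuw_def Fu_def[abs_def])
qed

lemma smooth_on_iter_dderiv_commute:
  fixes F :: "'a::real_normed_vector \<Rightarrow> 'b::euclidean_space"
  assumes F: "smooth_on S F" and "open S" "p \<in> S"
  shows "iter_dderiv [u, w] F p = iter_dderiv [w, u] F p"
proof -
  obtain d where "d > 0" and plane: "\<And>a b. \<bar>a\<bar> < d \<Longrightarrow> \<bar>b\<bar> < d \<Longrightarrow> p + a *\<^sub>R u + b *\<^sub>R w \<in> S"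
    using open_contains_plane_neighbourhood[OF \<open>open S\<close> \<open>p \<in> S\<close>] by blast
  define T where "T = {-d<..<d}"
  have T: "open T" "convex T" "0 \<in> T"
    using \<open>d > 0\<close> by (auto simp: T_def)
  have plane_T: "p + a *\<^sub>R u + b *\<^sub>R w \<in> S" if "a \<in> T" "b \<in> T" for a b
    using plane that by (simp add: T_def abs_less_iff)
  define Fw where "Fw x = frechet_derivative F (at x) w" for x
  have "Fw differentiable at p"
    unfolding Fw_def[abs_def] by (rule smooth_on_imp_differentiable_at[OF smooth_on_dderiv[OF F] \<open>open S\<close> \<open>p \<in> S\<close>])
  then have lhs: "((\<lambda>a. Fw (p + a *\<^sub>R u) - Fw p) has_vector_derivative iter_dderiv [u, w] F p) (at 0)"
    using has_vector_derivative_diff[OF has_vector_derivative_along_line[of Fw p 0 u] has_vector_derivative_const]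
    by (simp add: Fw_def[abs_def])
  have "continuous_on T (\<lambda>s. iter_dderiv [w, u] F (p + s *\<^sub>R u))"
    by (rule continuous_on_compose2[OF smooth_on_imp_continuous_on[OF smooth_on_iter_dderiv[OF F]]])
      (use plane_T[of _ 0] T in \<open>auto intro!: continuous_intros\<close>)
  from oint_has_vector_derivative[OF this T(1,2,3,3)]
  have rhs: "((\<lambda>a. oint 0 a (\<lambda>s. iter_dderiv [w, u] F (p + s *\<^sub>R u))) has_vector_derivative
      iter_dderiv [w, u] F p) (at 0)"
    by simp
  have "((\<lambda>a. Fw (p + a *\<^sub>R u) - Fw p) has_vector_derivative iter_dderiv [w, u] F p) (at 0)"
    by (rule has_vector_derivative_transform_within_open[OF rhs \<open>open T\<close> \<open>0 \<in> T\<close>])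
      (simp add: Fw_def dderiv_increment_along_line[OF F \<open>open S\<close> T _ plane_T])
  then show ?thesis
    by (rule vector_derivative_unique_at[OF lhs])
qed

section \<open>Gradient and curl in the plane\<close>

lemma frechet_derivative_add:
  assumes "f differentiable at x" "g differentiable at x"
  shows "frechet_derivative (\<lambda>y. f y + g y) (at x)
    = (\<lambda>v. frechet_derivative f (at x) v + frechet_derivative g (at x) v)"
  using assms by (intro frechet_derivative_at[symmetric] has_derivative_add) (simp_all add: frechet_derivative_works)

lemma grad_cong_open:
  assumes "open Q" "x \<in> Q" "\<And>y. y \<in> Q \<Longrightarrow> f y = g y"
  shows "grad f x = grad g x"
  by (simp add: grad_def frechet_derivative_cong_open[OF assms])

lemma grad_add:
  "f differentiable at x \<Longrightarrow> g differentiable at x \<Longrightarrow> grad (\<lambda>y. f y + g y) x = grad f x + grad g x"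
  by (simp add: grad_def frechet_derivative_add)

lemma rot_cong_open:
  assumes "open Q" "x \<in> Q" "\<And>y. y \<in> Q \<Longrightarrow> F y = G y"
  shows "rot F x = rot G x"
  unfolding rot_def using assms
  by (simp add: frechet_derivative_cong_open[OF assms(1,2), of "\<lambda>y. fst (F y)" "\<lambda>y. fst (G y)"]
      frechet_derivative_cong_open[OF assms(1,2), of "\<lambda>y. snd (F y)" "\<lambda>y. snd (G y)"])

lemma rot_eq_frechet_derivative:
  assumes "F differentiable at x"
  shows "rot F x = snd (frechet_derivative F (at x) (1, 0)) - fst (frechet_derivative F (at x) (0, 1))"
proof -
  note F' = frechet_derivative_works[THEN iffD1, OF assms]
  show ?thesis
    unfolding rot_def
    by (simp add: frechet_derivative_at[OF has_derivative_snd[OF F'], symmetric]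
        frechet_derivative_at[OF has_derivative_fst[OF F'], symmetric])
qed

lemma rot_add:
  "F differentiable at x \<Longrightarrow> G differentiable at x \<Longrightarrow> rot (\<lambda>y. F y + G y) x = rot F x + rot G x"
  by (simp add: rot_eq_frechet_derivative frechet_derivative_add)

definition space_grad :: "(real \<times> (real \<times> real) \<Rightarrow> real) \<Rightarrow> real \<times> (real \<times> real) \<Rightarrow> real \<times> real" where
  "space_grad F p = (frechet_derivative F (at p) (0, 1, 0), frechet_derivative F (at p) (0, 0, 1))"

lemma grad_slice_eq_space_grad:
  "F differentiable at (s, x) \<Longrightarrow> grad (\<lambda>y. F (s, y)) x = space_grad F (s, x)"
  by (simp add: grad_def space_grad_def frechet_derivative_at[OF has_derivative_slice_snd, symmetric])

lemma smooth_on_space_grad: "smooth_on S F \<Longrightarrow> open S \<Longrightarrow> smooth_on S (space_grad F)"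
  unfolding space_grad_def[abs_def] by (intro smooth_on_Pair smooth_on_dderiv)

lemma grad_oint_slice:
  assumes F: "smooth_on (UNIV \<times> Q) F" and "open Q" "x \<in> Q"
  shows "grad (\<lambda>y. oint a b (\<lambda>s. F (s, y))) x = oint a b (\<lambda>s. space_grad F (s, x))"
proof -
  have cont: "continuous_on (closed_segment a b) (\<lambda>s. space_grad F (s, x))"
    using continuous_on_slice_fst[OF smooth_on_imp_continuous_on[OF smooth_on_space_grad[OF F]] \<open>x \<in> Q\<close>]
      \<open>open Q\<close> continuous_on_subset by (blast intro: open_Times)
  have "grad (\<lambda>y. oint a b (\<lambda>s. F (s, y))) x
      = (oint a b (\<lambda>s. fst (space_grad F (s, x))), oint a b (\<lambda>s. snd (space_grad F (s, x))))"
    by (simp add: grad_def space_grad_def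
        frechet_derivative_at[OF has_derivative_oint_slice[OF F \<open>open Q\<close> \<open>x \<in> Q\<close>], symmetric])
  also have "\<dots> = oint a b (\<lambda>s. space_grad F (s, x))"
    by (simp add: oint_linear[OF bounded_linear_fst cont, symmetric] oint_linear[OF bounded_linear_snd cont, symmetric])
  finally show ?thesis .
qed

lemma rot_oint_space_grad:
  assumes F: "smooth_on (UNIV \<times> Q) F" and "open Q" "x \<in> Q"
  shows "rot (\<lambda>y. oint a b (\<lambda>s. space_grad F (s, y))) x = 0"
proof -
  have S: "open (UNIV \<times> Q)" using \<open>open Q\<close> by (simp add: open_Times)
  have G: "smooth_on (UNIV \<times> Q) (space_grad F)"
    by (rule smooth_on_space_grad[OF F S])
  note D = has_derivative_oint_slice[OF G \<open>open Q\<close> \<open>x \<in> Q\<close>, of a b]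
  define DG where "DG v s = frechet_derivative (space_grad F) (at (s, x)) (0, v)" for v s
  have cont: "continuous_on (closed_segment a b) (DG v)" for v
    using continuous_on_slice_fst[OF smooth_on_imp_continuous_on[OF smooth_on_dderiv[OF G]] \<open>x \<in> Q\<close>]
      continuous_on_subset unfolding DG_def by blast
  have symmetric: "snd (DG (1, 0) s) = fst (DG (0, 1) s)" for s
  proof -
    have G': "(space_grad F has_derivative frechet_derivative (space_grad F) (at (s, x))) (at (s, x))"
      using smooth_on_imp_differentiable_at[OF G S] \<open>x \<in> Q\<close> by (simp add: frechet_derivative_works)
    have "snd (DG (1, 0) s) = frechet_derivative (\<lambda>p. snd (space_grad F p)) (at (s, x)) (0, 1, 0)"
      by (simp add: DG_def frechet_derivative_at[OF has_derivative_snd[OF G'], symmetric])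
    also have "\<dots> = iter_dderiv [(0, 1, 0), (0, 0, 1)] F (s, x)"
      by (simp add: space_grad_def)
    also have "\<dots> = iter_dderiv [(0, 0, 1), (0, 1, 0)] F (s, x)"
      using smooth_on_iter_dderiv_commute[OF F S] \<open>x \<in> Q\<close> by simp
    also have "\<dots> = frechet_derivative (\<lambda>p. fst (space_grad F p)) (at (s, x)) (0, 0, 1)"
      by (simp add: space_grad_def)
    also have "\<dots> = fst (DG (0, 1) s)"
      by (simp add: DG_def frechet_derivative_at[OF has_derivative_fst[OF G'], symmetric])
    finally show ?thesis .
  qed
  have "rot (\<lambda>y. oint a b (\<lambda>s. space_grad F (s, y))) x
      = snd (oint a b (DG (1, 0))) - fst (oint a b (DG (0, 1)))"
    using rot_eq_frechet_derivative[OF differentiableI[OF D]] frechet_derivative_at[OF D, symmetric]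
    by (simp add: DG_def[abs_def])
  also have "\<dots> = 0"
    using symmetric by (simp add: oint_linear[OF bounded_linear_snd cont] oint_linear[OF bounded_linear_fst cont])
  finally show ?thesis .
qed

section \<open>The gauge transformation\<close>

lemma grad_eq_space_grad:
  fixes \<phi> :: "real \<Rightarrow> real \<times> real \<Rightarrow> real"
  assumes "smooth_on (UNIV \<times> Q) (case_prod \<phi>)" "open Q" "x \<in> Q"
  shows "grad (\<phi> s) x = space_grad (case_prod \<phi>) (s, x)"
  using grad_slice_eq_space_grad[OF smooth_on_imp_differentiable_at[OF assms(1)]] assms(2,3)
  by (simp add: open_Times)

lemma continuous_on_grad_slice:
  fixes \<phi> :: "real \<Rightarrow> real \<times> real \<Rightarrow> real"
  assumes "smooth_on (UNIV \<times> Q) (case_prod \<phi>)" "open Q" "x \<in> Q"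
  shows "continuous_on UNIV (\<lambda>s. grad (\<phi> s) x)"
  using continuous_on_slice_fst[OF smooth_on_imp_continuous_on[OF smooth_on_space_grad[OF assms(1)]] assms(3)]
    assms by (simp add: grad_eq_space_grad open_Times)

lemma smooth_on_Aphi:
  fixes \<phi> :: "real \<Rightarrow> real \<times> real \<Rightarrow> real"
  assumes \<phi>: "smooth_on (UNIV \<times> Q) (case_prod \<phi>)" and A: "smooth_on (UNIV \<times> Q) (case_prod A)"
    and "open Q"
  shows "smooth_on (UNIV \<times> Q) (case_prod (Aphi A \<phi>))"
proof -
  have S: "open (UNIV \<times> Q)" using \<open>open Q\<close> by (simp add: open_Times)
  have "smooth_on (UNIV \<times> Q) (\<lambda>p. case_prod A p + time_primitive (space_grad (case_prod \<phi>)) p)"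
    by (intro smooth_on_add A smooth_on_time_primitive smooth_on_space_grad \<phi> S \<open>open Q\<close>)
  then show ?thesis
    by (rule smooth_on_cong[OF S, rotated])
      (use \<phi> \<open>open Q\<close> in \<open>auto simp: Aphi_def time_primitive_def grad_eq_space_grad\<close>)
qed

lemma tdot_Aphi:
  fixes \<phi> :: "real \<Rightarrow> real \<times> real \<Rightarrow> real"
  assumes \<phi>: "smooth_on (UNIV \<times> Q) (case_prod \<phi>)" and A: "smooth_on (UNIV \<times> Q) (case_prod A)"
    and "open Q" "x \<in> Q"
  shows "tdot (Aphi A \<phi>) t x = tdot A t x + grad (\<phi> t) x"
proof -
  have "(\<lambda>s. A s x) differentiable at t"
    using differentiable_slice_fst[OF smooth_on_imp_differentiable_at[OF A]] \<open>open Q\<close> \<open>x \<in> Q\<close>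
    by (simp add: open_Times)
  then have "((\<lambda>s. A s x) has_vector_derivative tdot A t x) (at t)"
    by (simp add: tdot_def vector_derivative_works)
  moreover have "((\<lambda>s. oint 0 s (\<lambda>s. grad (\<phi> s) x)) has_vector_derivative grad (\<phi> t) x) (at t)"
    by (rule oint_has_vector_derivative[OF continuous_on_grad_slice[OF \<phi> \<open>open Q\<close> \<open>x \<in> Q\<close>]]) auto
  ultimately have "((\<lambda>s. Aphi A \<phi> s x) has_vector_derivative tdot A t x + grad (\<phi> t) x) (at t)"
    unfolding Aphi_def by (rule has_vector_derivative_add)
  then show ?thesis
    unfolding tdot_def by (rule vector_derivative_at)
qed

lemma rot_Aphi:
  fixes \<phi> :: "real \<Rightarrow> real \<times> real \<Rightarrow> real"
  assumes \<phi>: "smooth_on (UNIV \<times> Q) (case_prod \<phi>)" and A: "smooth_on (UNIV \<times> Q) (case_prod A)"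
    and "open Q" "x \<in> Q"
  shows "rot (Aphi A \<phi> t) x = rot (A t) x"
proof -
  define G where "G y = oint 0 t (\<lambda>s. space_grad (case_prod \<phi>) (s, y))" for y
  have "A t differentiable at x"
    using differentiable_slice_snd[OF smooth_on_imp_differentiable_at[OF A, of "(t, x)"]] \<open>open Q\<close> \<open>x \<in> Q\<close>
    by (simp add: open_Times)
  moreover have "G differentiable at x"
    unfolding G_def
    by (rule differentiableI[OF has_derivative_oint_slice[OF smooth_on_space_grad[OF \<phi>] \<open>open Q\<close> \<open>x \<in> Q\<close>]])
      (use \<open>open Q\<close> in \<open>simp add: open_Times\<close>)
  moreover have "rot (Aphi A \<phi> t) x = rot (\<lambda>y. A t y + G y) x"
    using \<phi> \<open>open Q\<close> \<open>x \<in> Q\<close> by (intro rot_cong_open) (auto simp: Aphi_def G_def grad_eq_space_grad)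
  moreover have "rot G x = 0"
    unfolding G_def by (rule rot_oint_space_grad[OF \<phi> \<open>open Q\<close> \<open>x \<in> Q\<close>])
  ultimately show ?thesis
    by (simp add: rot_add)
qed

lemma Aphi_twist:
  fixes \<phi> :: "real \<Rightarrow> real \<times> real \<Rightarrow> real"
  assumes \<phi>: "smooth_on (UNIV \<times> Q) (case_prod \<phi>)" and periodic: "\<And>s y. y \<in> Q \<Longrightarrow> \<phi> (s + 1) y = \<phi> s y"
    and "open Q" "x \<in> Q"
    and twist: "A (t + 1) x - A t x = grad (f t) x" and f: "f t differentiable at x"
  shows "Aphi A \<phi> (t + 1) x - Aphi A \<phi> t x = grad (\<lambda>y. f t y + oint 0 1 (\<lambda>s. \<phi> s y)) x"
proof -
  define g where "g = (\<lambda>s. grad (\<phi> s) x)"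
  have "g (s + 1) = g s" for s
    unfolding g_def using periodic by (intro grad_cong_open[OF \<open>open Q\<close> \<open>x \<in> Q\<close>])
  then have "oint 0 (t + 1) g - oint 0 t g = oint 0 1 g"
    using oint_shift_periodic continuous_on_grad_slice[OF \<phi> \<open>open Q\<close> \<open>x \<in> Q\<close>] unfolding g_def by blast
  then have "Aphi A \<phi> (t + 1) x - Aphi A \<phi> t x = grad (f t) x + oint 0 1 g"
    using twist by (simp add: Aphi_def g_def algebra_simps)
  also have "oint 0 1 g = grad (\<lambda>y. oint 0 1 (\<lambda>s. \<phi> s y)) x"
    using grad_oint_slice[OF \<phi> \<open>open Q\<close> \<open>x \<in> Q\<close>] \<phi> \<open>open Q\<close> \<open>x \<in> Q\<close>
    by (simp add: g_def grad_eq_space_grad)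
  also have "grad (f t) x + \<dots> = grad (\<lambda>y. f t y + oint 0 1 (\<lambda>s. \<phi> s y)) x"
    using has_derivative_oint_slice[OF \<phi> \<open>open Q\<close> \<open>x \<in> Q\<close>, of 0 1]
    by (intro grad_add[symmetric] f) (auto intro: differentiableI)
  finally show ?thesis .
qed

lemma twisted_periodic_vp_Aphi:
  fixes \<phi> :: "real \<Rightarrow> real \<times> real \<Rightarrow> real"
  assumes "open Q" and \<phi>: "smooth_on (UNIV \<times> Q) (case_prod \<phi>)"
    and periodic: "\<And>s y. y \<in> Q \<Longrightarrow> \<phi> (s + 1) y = \<phi> s y" and "twisted_periodic_vp Q A"
  shows "twisted_periodic_vp Q (Aphi A \<phi>)"
proof -
  have S: "open (UNIV \<times> Q)" using \<open>open Q\<close> by (simp add: open_Times)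
  obtain f where A: "smooth_on (UNIV \<times> Q) (case_prod A)"
    and tdot_A: "\<And>t x. x \<in> Q \<Longrightarrow> tdot A (t + 1) x = tdot A t x"
    and rot_A: "\<And>t x. x \<in> Q \<Longrightarrow> rot (A (t + 1)) x = rot (A t) x"
    and f: "smooth_on (UNIV \<times> Q) (case_prod f)"
    and twist: "\<And>t x. x \<in> Q \<Longrightarrow> A (t + 1) x - A t x = grad (f t) x"
    using \<open>twisted_periodic_vp Q A\<close> unfolding twisted_periodic_vp_def case_prod_unfold by blast
  have "grad (\<phi> (t + 1)) x = grad (\<phi> t) x" if "x \<in> Q" for t x
    using periodic by (intro grad_cong_open[OF \<open>open Q\<close> that])
  then have "tdot (Aphi A \<phi>) (t + 1) x = tdot (Aphi A \<phi>) t x" if "x \<in> Q" for t x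
    using that by (simp add: tdot_Aphi[OF \<phi> A \<open>open Q\<close>] tdot_A)
  moreover have "rot (Aphi A \<phi> (t + 1)) x = rot (Aphi A \<phi> t) x" if "x \<in> Q" for t x
    using that by (simp add: rot_Aphi[OF \<phi> A \<open>open Q\<close>] rot_A)
  moreover have "smooth_on (UNIV \<times> Q) (case_prod (\<lambda>t y. f t y + oint 0 1 (\<lambda>s. \<phi> s y)))"
    using smooth_on_add[OF f smooth_on_oint_slice[OF \<phi> \<open>open Q\<close>, of 1] S] by (simp add: case_prod_unfold)
  moreover have "Aphi A \<phi> (t + 1) x - Aphi A \<phi> t x = grad (\<lambda>y. f t y + oint 0 1 (\<lambda>s. \<phi> s y)) x"
    if "x \<in> Q" for t x
    using differentiable_slice_snd[OF smooth_on_imp_differentiable_at[OF f S, of "(t, x)"]] that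
    by (intro Aphi_twist[where A = A and f = f and t = t, OF \<phi> periodic \<open>open Q\<close> that twist[OF that]]) simp_all
  ultimately show ?thesis
    using smooth_on_Aphi[OF \<phi> A \<open>open Q\<close>] unfolding twisted_periodic_vp_def case_prod_unfold
    by (intro conjI exI[where x = "\<lambda>t y. f t y + oint 0 1 (\<lambda>s. \<phi> s y)"]) auto
qed

lemma solves_eq_Aphi_iff:
  fixes \<phi> :: "real \<Rightarrow> real \<times> real \<Rightarrow> real"
  assumes \<phi>: "smooth_on (UNIV \<times> Q) (case_prod \<phi>)" and A: "smooth_on (UNIV \<times> Q) (case_prod A)"
    and "open Q" "q t \<in> Q"
  shows "solves_eq (Aphi A \<phi>) (\<lambda>_ _. 0) q t \<longleftrightarrow> solves_eq A \<phi> q t"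
proof -
  have "grad (\<lambda>_. 0) y = 0" for y
    by (simp add: grad_def zero_prod_def)
  then show ?thesis
    unfolding solves_eq_def rot_Aphi[OF \<phi> A \<open>open Q\<close> \<open>q t \<in> Q\<close>] tdot_Aphi[OF \<phi> A \<open>open Q\<close> \<open>q t \<in> Q\<close>]
    by (simp add: algebra_simps)
qed

theorem lemma3p7:
  fixes Q :: "(real \<times> real) set"
    and \<phi> :: "real \<Rightarrow> real \<times> real \<Rightarrow> real"
    and A :: "real \<Rightarrow> real \<times> real \<Rightarrow> real \<times> real"
  assumes Q_open: "open Q"
    and phi_smooth: "smooth_on (UNIV \<times> Q) (\<lambda>p. \<phi> (fst p) (snd p))"
    and phi_periodic: "\<forall>t. \<forall>x\<in>Q. \<phi> (t + 1) x = \<phi> t x"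
    and A_tp: "twisted_periodic_vp Q A"
  shows "twisted_periodic_vp Q (Aphi A \<phi>) \<and>
         (\<forall>(I :: real set) (q :: real \<Rightarrow> real \<times> real).
            open I \<longrightarrow> smooth_on I q \<longrightarrow> q ` I \<subseteq> Q \<longrightarrow>
            ((\<forall>t\<in>I. solves_eq A \<phi> q t) \<longleftrightarrow> (\<forall>t\<in>I. solves_eq (Aphi A \<phi>) (\<lambda>_ _. 0) q t)))"
proof -
  have \<phi>: "smooth_on (UNIV \<times> Q) (case_prod \<phi>)"
    using phi_smooth by (simp add: case_prod_unfold)
  have A: "smooth_on (UNIV \<times> Q) (case_prod A)"
    using A_tp by (simp add: twisted_periodic_vp_def case_prod_unfold)
  have "twisted_periodic_vp Q (Aphi A \<phi>)"
    using phi_periodic by (intro twisted_periodic_vp_Aphi[OF Q_open \<phi> _ A_tp]) blast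
  \<comment> \<open>The equations agree pointwise in t.\<close>
  moreover have "(\<forall>t\<in>I. solves_eq A \<phi> q t) \<longleftrightarrow> (\<forall>t\<in>I. solves_eq (Aphi A \<phi>) (\<lambda>_ _. 0) q t)"
    if "q ` I \<subseteq> Q" for I q
    using solves_eq_Aphi_iff[OF \<phi> A Q_open] that by blast
  ultimately show ?thesis
    by blast
qed

end
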